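(* Let $M\ge2$ and let $J_1,\dots,J_{M-1}$, $\mu_1,\dots,\mu_M$, $h_1^z,\dots,h_M^z$ be real numbers. On the open chain of $M$ sites consider $$H=\sum_{m=1}^{M-1}\Big(J_m c_{m+1}^\dagger c_m\sigma_{m+1}^+ + \text{h.c.}\Big)+\sum_{m=1}^{M}\mu_m c_m^\dagger c_m+\sum_{m=1}^M h_m^z\sigma_m^z.$$ For every number $\alpha$, the operator $$Q^{(\exp)}(\alpha)=\sum_{m=1}^{M}\Big[\alpha^m c_m^\dagger c_m+\alpha^{m-1}(1-\alpha)\frac{\sigma_m^z+1}{2}\Big]$$ commutes with $H$.
   Context: Each site $m$ carries one spinless fermion mode ($c_m,c_m^\dagger$, canonical anticommutation relations) and one spin-$1/2$ with Pauli matrices $\sigma_m^{x,y,z}$; $\sigma_m^{\pm}=\sigma_m^x\pm i\sigma_m^y$, so that $\sigma_m^+$ raises $\sigma_m^z$. *)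

theory Defs
  imports Complex_Main
begin

text \<open>Hilbert space of the open chain of M sites: orthonormal basis indexed by
  configurations, lists of length M; entry k (0-based, i.e. site k+1) is a pair
  (fermion occupied?, spin up?).\<close>

type_synonym cfg = "(bool \<times> bool) list"
type_synonym op = "cfg \<Rightarrow> cfg \<Rightarrow> complex"

definition cfgs :: "nat \<Rightarrow> cfg set" where
  "cfgs M = {xs. length xs = M}"

definition opmul :: "nat \<Rightarrow> op \<Rightarrow> op \<Rightarrow> op" where
  "opmul M A B = (\<lambda>x y. \<Sum>z\<in>cfgs M. A x z * B z y)"

definition adj :: "op \<Rightarrow> op" where
  "adj A = (\<lambda>x y. cnj (A y x))"

definition idop :: op where
  "idop = (\<lambda>x y. if x = y then 1 else 0)"

text \<open>Fermion annihilation operator at site m (1-based), Jordan-Wigner ordering by site.\<close>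
definition cann :: "nat \<Rightarrow> op" where
  "cann m = (\<lambda>x y. if fst (y ! (m-1)) \<and> x = y[m-1 := (False, snd (y ! (m-1)))]
      then (-1) ^ length (filter fst (take (m-1) y)) else 0)"

definition ccre :: "nat \<Rightarrow> op" where
  "ccre m = adj (cann m)"

definition flipspin :: "nat \<Rightarrow> cfg \<Rightarrow> cfg" where
  "flipspin m y = y[m-1 := (fst (y ! (m-1)), \<not> snd (y ! (m-1)))]"

text \<open>Pauli matrices at site m; spin up = True is the +1 eigenvector of sigma z.\<close>
definition sigx :: "nat \<Rightarrow> op" where
  "sigx m = (\<lambda>x y. if x = flipspin m y then 1 else 0)"

definition sigy :: "nat \<Rightarrow> op" where
  "sigy m = (\<lambda>x y. if x = flipspin m y then (if snd (y ! (m-1)) then \<i> else - \<i>) else 0)"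

definition sigz :: "nat \<Rightarrow> op" where
  "sigz m = (\<lambda>x y. if x = y then (if snd (y ! (m-1)) then 1 else -1) else 0)"

definition sigp :: "nat \<Rightarrow> op" where
  "sigp m = (\<lambda>x y. sigx m x y + \<i> * sigy m x y)"

definition numop :: "nat \<Rightarrow> nat \<Rightarrow> op" where
  "numop M m = opmul M (ccre m) (cann m)"

definition hop :: "nat \<Rightarrow> nat \<Rightarrow> op" where
  "hop M m = opmul M (opmul M (ccre (m+1)) (cann m)) (sigp (m+1))"

definition Ham :: "nat \<Rightarrow> (nat \<Rightarrow> real) \<Rightarrow> (nat \<Rightarrow> real) \<Rightarrow> (nat \<Rightarrow> real) \<Rightarrow> op" where
  "Ham M J mu hz = (\<lambda>x y.
      (\<Sum>m=1..M-1. complex_of_real (J m) * hop M m x y + adj (\<lambda>a b. complex_of_real (J m) * hop M m a b) x y)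
    + (\<Sum>m=1..M. complex_of_real (mu m) * numop M m x y)
    + (\<Sum>m=1..M. complex_of_real (hz m) * sigz m x y))"

definition Qexp :: "nat \<Rightarrow> complex \<Rightarrow> op" where
  "Qexp M \<alpha> = (\<lambda>x y. \<Sum>m=1..M.
      \<alpha> ^ m * numop M m x y + \<alpha> ^ (m-1) * (1 - \<alpha>) * ((sigz m x y + idop x y) / 2))"

end

theory Submission
  imports Defs
begin

(* In the basis of occupation/spin configurations Q^(exp) is diagonal: site m contributes
   alpha^m if it holds a fermion and alpha^(m-1) (1 - alpha) if its spin is up.  The only
   off-diagonal entries of H come from the hopping terms c^+_(m+1) c_m sigma^+_(m+1) and their
   adjoints, which move a fermion from site m to m+1 and raise the spin at m+1.  Such a move
   changes the eigenvalue of Q^(exp) by -alpha^m + alpha^(m+1) + alpha^m (1 - alpha) = 0, so H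
   only connects configurations with equal eigenvalue, and a diagonal operator commutes with
   every operator of that kind. *)

lemma finite_cfgs: "finite (cfgs M)"
  using finite_lists_length_eq[of "UNIV :: (bool \<times> bool) set" M] by (simp add: cfgs_def)

definition diagop :: "(cfg \<Rightarrow> complex) \<Rightarrow> op" where
  "diagop d = (\<lambda>x y. if x = y then d x else 0)"

lemma opmul_cong:
  assumes "\<And>u v. u \<in> cfgs M \<Longrightarrow> v \<in> cfgs M \<Longrightarrow> A u v = A' u v"
    and "\<And>u v. u \<in> cfgs M \<Longrightarrow> v \<in> cfgs M \<Longrightarrow> B u v = B' u v"
    and "x \<in> cfgs M" "y \<in> cfgs M"
  shows "opmul M A B x y = opmul M A' B' x y"
  unfolding opmul_def using assms by (intro sum.cong) simp_all

lemma opmul_nonzeroE: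
  assumes "opmul M A B x y \<noteq> 0"
  obtains z where "A x z \<noteq> 0" "B z y \<noteq> 0"
proof -
  from assms obtain z where "A x z * B z y \<noteq> 0"
    unfolding opmul_def by (meson sum.not_neutral_contains_not_neutral)
  with that show ?thesis by auto
qed

lemma opmul_diagop_right:
  assumes "y \<in> cfgs M"
  shows "opmul M A (diagop d) x y = A x y * d y"
  using assms finite_cfgs by (simp add: opmul_def diagop_def if_distrib cong: if_cong)

lemma opmul_diagop_left:
  assumes "x \<in> cfgs M"
  shows "opmul M (diagop d) A x y = d x * A x y"
proof -
  have "opmul M (diagop d) A x y = (\<Sum>z\<in>cfgs M. if x = z then d x * A z y else 0)"
    unfolding opmul_def diagop_def by (rule sum.cong) simp_all
  then show ?thesis using assms finite_cfgs by simp
qed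

lemma opmul_diagop_commute:
  assumes "x \<in> cfgs M" "y \<in> cfgs M" and "A x y \<noteq> 0 \<Longrightarrow> d x = d y"
  shows "opmul M A (diagop d) x y = opmul M (diagop d) A x y"
  using assms by (cases "A x y = 0") (simp_all add: opmul_diagop_right opmul_diagop_left)

lemma list_update_cancel:
  assumes "xs[k := v] = ys[k := v]" and "xs ! k = ys ! k"
  shows "xs = ys"
  by (metis assms list_update_id list_update_overwrite)

lemma cann_nonzero_iff:
  "cann m x y \<noteq> 0 \<longleftrightarrow> fst (y ! (m-1)) \<and> x = y[m-1 := (False, snd (y ! (m-1)))]"
  by (simp add: cann_def)

lemma cann_injective:
  assumes "cann m z x \<noteq> 0" and "cann m z y \<noteq> 0"
  shows "x = y"
proof (cases "m - 1 < length y")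
  case True
  from assms have zx: "z = x[m-1 := (False, snd (x ! (m-1)))]"
    and zy: "z = y[m-1 := (False, snd (y ! (m-1)))]"
    and "fst (x ! (m-1))" "fst (y ! (m-1))"
    by (simp_all add: cann_nonzero_iff)
  have "snd (x ! (m-1)) = snd (y ! (m-1))"
    using zx zy True by (metis length_list_update nth_list_update_eq snd_conv)
  with \<open>fst (x ! (m-1))\<close> \<open>fst (y ! (m-1))\<close> have "x ! (m-1) = y ! (m-1)"
    by (simp add: prod_eq_iff)
  with zx zy show ?thesis
    by (metis list_update_cancel)
next
  case False
  with assms have "x[m-1 := (False, snd (x ! (m-1)))] = y"
    by (simp add: cann_nonzero_iff list_update_beyond)
  with False show ?thesis
    by (metis length_list_update list_update_beyond not_less)
qed

lemma numop_eq:
  assumes "y \<in> cfgs M"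
  shows "numop M m x y = (if x = y \<and> fst (y ! (m-1)) then 1 else 0)"
proof -
  define z0 where "z0 = y[m-1 := (False, snd (y ! (m-1)))]"
  have "z0 \<in> cfgs M" using assms by (simp add: z0_def cfgs_def)
  have "numop M m x y = (\<Sum>z\<in>cfgs M. if z = z0 then cnj (cann m z0 x) * cann m z0 y else 0)"
    unfolding numop_def opmul_def ccre_def adj_def
    by (rule sum.cong) (auto simp: cann_def z0_def)
  also have "\<dots> = cnj (cann m z0 x) * cann m z0 y"
    using \<open>z0 \<in> cfgs M\<close> finite_cfgs by simp
  also have "\<dots> = (if x = y \<and> fst (y ! (m-1)) then 1 else 0)"
  proof (cases "fst (y ! (m-1))")
    case True
    then have "cann m z0 y \<noteq> 0" by (simp add: cann_nonzero_iff z0_def)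
    then have "x \<noteq> y \<Longrightarrow> cann m z0 x = 0" using cann_injective by blast
    with True show ?thesis
      by (auto simp: cann_def z0_def power_mult_distrib[symmetric])
  next
    case False
    then show ?thesis by (simp add: cann_def)
  qed
  finally show ?thesis .
qed

lemma sigp_eq: "sigp m x y = (if x = flipspin m y \<and> \<not> snd (y ! (m-1)) then 2 else 0)"
  by (simp add: sigp_def sigx_def sigy_def)

(* List positions m-1 and m are the sites m and m+1 of the hopping term. *)

lemma hop_nonzeroE:
  assumes "hop M m x y \<noteq> 0" "1 \<le> m" "m < length y"
  obtains s where "y ! (m-1) = (True, s)" "y ! m = (False, False)"
    "x = y[m-1 := (False, s), m := (True, True)]"
proof -
  obtain z w where "ccre (m+1) x w \<noteq> 0" "cann m w z \<noteq> 0" "sigp (m+1) z y \<noteq> 0"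
    using assms(1) unfolding hop_def by (metis opmul_nonzeroE)
  then have x: "fst (x ! m)" "w = x[m := (False, snd (x ! m))]"
    and z: "fst (z ! (m-1))" "w = z[m-1 := (False, snd (z ! (m-1)))]"
    by (simp_all add: ccre_def adj_def cann_nonzero_iff)
  from \<open>sigp (m+1) z y \<noteq> 0\<close> have y: "\<not> snd (y ! m)" "z = y[m := (fst (y ! m), True)]"
    by (auto simp: sigp_eq flipspin_def split: if_splits)
  have "m - 1 \<noteq> m" using assms(2) by simp
  have "length x = length y" using x(2) z(2) y(2) by (metis length_list_update)
  have "(False, snd (x ! m)) = (fst (y ! m), True)"
    using x(2) z(2) y(2) \<open>m - 1 \<noteq> m\<close> \<open>length x = length y\<close> assms(3)
    by (metis nth_list_update_eq nth_list_update_neq length_list_update)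
  then have xm: "x ! m = (True, True)" and ym: "y ! m = (False, False)"
    using x(1) y(1) by (auto simp: prod_eq_iff)
  have zm1: "z ! (m-1) = y ! (m-1)" using y(2) \<open>m - 1 \<noteq> m\<close> by simp
  show ?thesis
  proof
    show "y ! (m-1) = (True, snd (y ! (m-1)))" using z(1) zm1 by (simp add: prod_eq_iff)
    show "y ! m = (False, False)" by (fact ym)
    have "x = w[m := (True, True)]" using x(2) xm by (metis list_update_id list_update_overwrite)
    then show "x = y[m-1 := (False, snd (y ! (m-1))), m := (True, True)]"
      using z(2) y(2) zm1 \<open>m - 1 \<noteq> m\<close> by (simp add: list_update_swap)
  qed
qed

definition qexp_weight :: "complex \<Rightarrow> nat \<Rightarrow> bool \<times> bool \<Rightarrow> complex" where
  "qexp_weight \<alpha> m p = (if fst p then \<alpha> ^ m else 0) + (if snd p then \<alpha> ^ (m-1) * (1 - \<alpha>) else 0)"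

definition qexp_eigenvalue :: "complex \<Rightarrow> nat \<Rightarrow> cfg \<Rightarrow> complex" where
  "qexp_eigenvalue \<alpha> M x = (\<Sum>m=1..M. qexp_weight \<alpha> m (x ! (m-1)))"

lemma Qexp_eq_diagop:
  assumes "x \<in> cfgs M" "y \<in> cfgs M"
  shows "Qexp M \<alpha> x y = diagop (qexp_eigenvalue \<alpha> M) x y"
  using assms
  by (auto simp: Qexp_def qexp_eigenvalue_def qexp_weight_def diagop_def numop_eq sigz_def idop_def
      intro!: sum.cong sum.neutral)

lemma qexp_eigenvalue_list_update:
  assumes "x \<in> cfgs M" "k < M"
  shows "qexp_eigenvalue \<alpha> M (x[k := p])
    = qexp_eigenvalue \<alpha> M x - qexp_weight \<alpha> (Suc k) (x ! k) + qexp_weight \<alpha> (Suc k) p"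
proof -
  let ?w = "\<lambda>x m. qexp_weight \<alpha> m (x ! (m-1))"
  have k: "Suc k \<in> {1..M}" and "length x = M" using assms by (auto simp: cfgs_def)
  have "qexp_eigenvalue \<alpha> M (x[k := p])
      = ?w (x[k := p]) (Suc k) + sum (?w (x[k := p])) ({1..M} - {Suc k})"
    unfolding qexp_eigenvalue_def by (rule sum.remove[OF finite_atLeastAtMost k])
  also have "sum (?w (x[k := p])) ({1..M} - {Suc k}) = sum (?w x) ({1..M} - {Suc k})"
    by (rule sum.cong) auto
  also have "\<dots> = qexp_eigenvalue \<alpha> M x - ?w x (Suc k)"
    unfolding qexp_eigenvalue_def using assms(2) by (simp add: sum_diff1)
  finally show ?thesis using \<open>length x = M\<close> assms(2) by simp
qed

lemma qexp_eigenvalue_hop: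
  assumes "y \<in> cfgs M" "1 \<le> m" "m < M" "hop M m x y \<noteq> 0"
  shows "qexp_eigenvalue \<alpha> M x = qexp_eigenvalue \<alpha> M y"
proof -
  have "m < length y" using assms(1,3) by (simp add: cfgs_def)
  with assms(2,4) obtain s where y: "y ! (m-1) = (True, s)" "y ! m = (False, False)"
    and x: "x = y[m-1 := (False, s), m := (True, True)]"
    by (metis hop_nonzeroE)
  have "y[m-1 := (False, s)] \<in> cfgs M" using assms(1) by (simp add: cfgs_def)
  moreover have "Suc (m-1) = m" "m - 1 < M" using assms(2,3) by simp_all
  ultimately show ?thesis
    unfolding x using assms(1,3) y
    by (simp add: qexp_eigenvalue_list_update qexp_weight_def algebra_simps flip: power_Suc)
qed

lemma Ham_offdiag:
  assumes "y \<in> cfgs M" "x \<noteq> y"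
  shows "Ham M J mu hz x y
    = (\<Sum>m=1..M-1. complex_of_real (J m) * hop M m x y + cnj (complex_of_real (J m) * hop M m y x))"
  using assms by (simp add: Ham_def adj_def numop_eq sigz_def)

lemma Ham_nonzero_imp_qexp_eigenvalue_eq:
  assumes "x \<in> cfgs M" "y \<in> cfgs M" "Ham M J mu hz x y \<noteq> 0"
  shows "qexp_eigenvalue \<alpha> M x = qexp_eigenvalue \<alpha> M y"
proof (cases "x = y")
  case False
  obtain m where "m \<in> {1..M-1}"
    and "complex_of_real (J m) * hop M m x y + cnj (complex_of_real (J m) * hop M m y x) \<noteq> 0"
    using assms(3) unfolding Ham_offdiag[OF assms(2) False]
    by (rule sum.not_neutral_contains_not_neutral)
  then have m: "1 \<le> m" "m < M" and "hop M m x y \<noteq> 0 \<or> hop M m y x \<noteq> 0" by auto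
  then show ?thesis
  proof (elim disjE)
    assume "hop M m x y \<noteq> 0"
    then show ?thesis by (rule qexp_eigenvalue_hop[OF assms(2) m])
  next
    assume "hop M m y x \<noteq> 0"
    then show ?thesis by (rule qexp_eigenvalue_hop[OF assms(1) m, symmetric])
  qed
qed simp

theorem mainTheorem6:
  fixes M :: nat and J mu hz :: "nat \<Rightarrow> real" and \<alpha> :: complex
  assumes "M \<ge> 2"
  shows "\<forall>x\<in>cfgs M. \<forall>y\<in>cfgs M.
           opmul M (Ham M J mu hz) (Qexp M \<alpha>) x y = opmul M (Qexp M \<alpha>) (Ham M J mu hz) x y"
proof (intro ballI)
  fix x y assume x: "x \<in> cfgs M" and y: "y \<in> cfgs M"
  let ?H = "Ham M J mu hz" and ?D = "diagop (qexp_eigenvalue \<alpha> M)"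
  have "opmul M ?H (Qexp M \<alpha>) x y = opmul M ?H ?D x y"
    using x y by (intro opmul_cong) (simp_all add: Qexp_eq_diagop)
  also have "\<dots> = opmul M ?D ?H x y"
    using x y by (intro opmul_diagop_commute Ham_nonzero_imp_qexp_eigenvalue_eq)
  also have "\<dots> = opmul M (Qexp M \<alpha>) ?H x y"
    using x y by (intro opmul_cong) (simp_all add: Qexp_eq_diagop)
  finally show "opmul M ?H (Qexp M \<alpha>) x y = opmul M (Qexp M \<alpha>) ?H x y" .
qed

end
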